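(* Let $[\mathbf v_1]\neq[\mathbf v_2]$ be points of $S^2/\pm1$. Choose one of the two simple (non-self-intersecting) geodesic segments in $S^2/\pm1$ from $[\mathbf v_1]$ to $[\mathbf v_2]$, lift it to a great-circle segment in $S^2$ (one of two lifts), and let $\mu\in S^3$ be the lifted rolling monodromy of rolling the moving sphere along this segment with radius ratio $\rho=3$. Then $\mu$ depends only on the ordered pair $([\mathbf v_1],[\mathbf v_2])$ and not on the choices made.
   Context: Identify $\mathbb R^3$ with $\mathrm{Im}(\mathbb H)$ and $S^3$ with unit quaternions. Rolling along a curve $\mathbf v(t)$ in $S^2$ with radius ratio $3$ is the curve $(\mathbf v(t),q(t))\in S^2\times S^3$ with $q(0)=1$, $4\dot{\mathbf v}=\boldsymbol\omega\times\mathbf v$ and $\boldsymbol\omega\cdot\mathbf v=0$, where $\boldsymbol\omega=2\dot q\bar q$; the lifted rolling monodromy is the final value of $q$. *)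

theory Defs
  imports "HOL-Analysis.Analysis" "HOL-Analysis.Cross3"
begin

text \<open>Quaternions H = R x Im(H), with Im(H) identified with R^3:
  the pair (a, u) stands for a + u_1 i + u_2 j + u_3 k.\<close>
type_synonym quat = "real \<times> (real^3)"

definition qmul :: "quat \<Rightarrow> quat \<Rightarrow> quat" where
  "qmul p q = (fst p * fst q - inner (snd p) (snd q),
               fst p *\<^sub>R snd q + fst q *\<^sub>R snd p + cross3 (snd p) (snd q))"

definition qconj :: "quat \<Rightarrow> quat" where
  "qconj q = (fst q, - snd q)"

definition qone :: quat where
  "qone = (1, 0)"

definition rolling :: "(real \<Rightarrow> real^3) \<Rightarrow> (real \<Rightarrow> quat) \<Rightarrow> bool" where
  "rolling v q \<longleftrightarrow>
     q 0 = qone \<and>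
     (\<forall>t\<in>{0..1}. norm (v t) = 1 \<and> norm (q t) = 1) \<and>
     (\<forall>t\<in>{0..1}. \<exists>v' q'.
        (v has_vector_derivative v') (at t within {0..1}) \<and>
        (q has_vector_derivative q') (at t within {0..1}) \<and>
        (let \<omega> = 2 *\<^sub>R qmul q' (qconj (q t)) in
           fst \<omega> = 0 \<and>
           4 *\<^sub>R v' = cross3 (snd \<omega>) (v t) \<and>
           inner (snd \<omega>) (v t) = 0))"

text \<open>The (minor) great-circle segment in S^2 from w1 to w2 (w2 \<noteq> \<plusminus>w1),
  parametrised proportionally to arc length on [0,1].\<close>
definition arc :: "real^3 \<Rightarrow> real^3 \<Rightarrow> real \<Rightarrow> real^3" where
  "arc w1 w2 t =
     (let \<theta> = arccos (inner w1 w2) in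
        (sin ((1 - t) * \<theta>) / sin \<theta>) *\<^sub>R w1 + (sin (t * \<theta>) / sin \<theta>) *\<^sub>R w2)"

end

theory Submission
  imports Defs
begin

text \<open>Solving the rolling conditions for \<open>\<omega>\<close> shows that rolling along \<open>v\<close> is the linear
  equation \<open>q' = (0, 2 v \<times> v') q\<close>. Left multiplication by a purely imaginary quaternion is
  skew-adjoint, so its flow preserves inner products and the solution is unique. Along a great
  circle of angular speed \<open>\<theta>\<close> with unit normal \<open>n\<close> one has \<open>v \<times> v' = \<theta> n\<close>, hence
  \<open>q t = cos (2\<theta>t) + sin (2\<theta>t) n\<close>. At \<open>t = 1\<close> this equals \<open>2c\<^sup>2 - 1 + 2c v\<^sub>1 \<times> v\<^sub>2\<close> with
  \<open>c = v\<^sub>1 \<bullet> v\<^sub>2\<close>, which is unchanged when \<open>v\<^sub>1\<close> or \<open>v\<^sub>2\<close> changes sign.\<close>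

lemma qmul_assoc: "qmul (qmul p q) r = qmul p (qmul q r)"
  by (simp add: qmul_def cross3_simps forall_3)

lemma qmul_qconj_left: "qmul (qconj q) q = ((norm q)\<^sup>2, 0)"
  by (cases q) (simp add: qmul_def qconj_def power2_norm_eq_inner cross3_simps forall_3)

lemma qmul_qconj_right: "qmul q (qconj q) = ((norm q)\<^sup>2, 0)"
  by (cases q) (simp add: qmul_def qconj_def power2_norm_eq_inner cross3_simps forall_3)

lemma qmul_qone_right: "qmul p qone = p"
  by (simp add: qmul_def qone_def)

lemma inner_qmul_pure_skew: "fst a = 0 \<Longrightarrow> inner (qmul a x) y = - inner x (qmul a y)"
  by (cases a, cases x, cases y) (simp add: qmul_def cross3_simps forall_3)

lemma cross3_cross3_left: "cross3 (cross3 a b) c = inner a c *\<^sub>R b - inner b c *\<^sub>R a"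
  by (simp add: cross3_simps forall_3)

lemma cross3_cross3_right: "cross3 a (cross3 b c) = inner a c *\<^sub>R b - inner a b *\<^sub>R c"
  by (simp add: cross3_simps forall_3)

lemma inner_left_pure_flow_const:
  fixes q p :: "real \<Rightarrow> quat"
  assumes a: "fst a = 0" and S: "convex S"
    and q: "\<And>t. t \<in> S \<Longrightarrow> (q has_vector_derivative qmul a (q t)) (at t within S)"
    and p: "\<And>t. t \<in> S \<Longrightarrow> (p has_vector_derivative qmul a (p t)) (at t within S)"
    and "s \<in> S" "t \<in> S"
  shows "inner (q s) (p s) = inner (q t) (p t)"
proof -
  have "((\<lambda>t. inner (q t) (p t)) has_derivative (\<lambda>h. 0)) (at t within S)" if "t \<in> S" for t
  proof -
    have "((\<lambda>t. inner (q t) (p t)) has_vector_derivative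
            inner (q t) (qmul a (p t)) + inner (qmul a (q t)) (p t)) (at t within S)"
      by (rule bounded_bilinear.has_vector_derivative[OF bounded_bilinear_inner q[OF that] p[OF that]])
    moreover have "inner (q t) (qmul a (p t)) + inner (qmul a (q t)) (p t) = 0"
      using inner_qmul_pure_skew[OF a, of "q t" "p t"] by simp
    ultimately show ?thesis
      by (simp add: has_vector_derivative_def)
  qed
  from has_derivative_zero_unique[OF S this \<open>s \<in> S\<close> \<open>t \<in> S\<close>] show ?thesis
    by simp
qed

lemma left_pure_flow_unique:
  fixes q p :: "real \<Rightarrow> quat"
  assumes a: "fst a = 0" and S: "convex S"
    and q: "\<And>t. t \<in> S \<Longrightarrow> (q has_vector_derivative qmul a (q t)) (at t within S)"
    and p: "\<And>t. t \<in> S \<Longrightarrow> (p has_vector_derivative qmul a (p t)) (at t within S)"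
    and st: "s \<in> S" "t \<in> S" and "q s = p s"
  shows "q t = p t"
proof -
  have "inner (q t - p t) (q t - p t) = inner (q s - p s) (q s - p s)"
    using inner_left_pure_flow_const[OF a S q q st] inner_left_pure_flow_const[OF a S p p st]
      inner_left_pure_flow_const[OF a S q p st]
    by (simp add: inner_diff_left inner_diff_right inner_commute)
  then show ?thesis
    using \<open>q s = p s\<close> by simp
qed

lemma rolling_has_vector_derivative:
  assumes roll: "rolling v q" and t: "t \<in> {0..1}"
    and v': "(v has_vector_derivative v') (at t within {0..1})"
  shows "(q has_vector_derivative qmul (0, 2 *\<^sub>R cross3 (v t) v') (q t)) (at t within {0..1})"
proof -
  obtain v'' q' where v'': "(v has_vector_derivative v'') (at t within {0..1})"
    and q': "(q has_vector_derivative q') (at t within {0..1})"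
    and conds: "fst (2 *\<^sub>R qmul q' (qconj (q t))) = 0"
      "4 *\<^sub>R v'' = cross3 (snd (2 *\<^sub>R qmul q' (qconj (q t)))) (v t)"
      "inner (snd (2 *\<^sub>R qmul q' (qconj (q t)))) (v t) = 0"
    using roll t unfolding rolling_def Let_def by blast
  have unit: "norm (v t) = 1" "norm (q t) = 1"
    using roll t unfolding rolling_def by auto
  have "v'' = v'"
    using vector_derivative_unique_within_closed_interval[of 0 1 t v v'' v'] v'' v' t by simp
  define b where "b = snd (qmul q' (qconj (q t)))"
  have "4 *\<^sub>R v' = 2 *\<^sub>R cross3 b (v t)"
    using conds(2) \<open>v'' = v'\<close> by (simp add: b_def cross_mult_left)
  then have "(1 / 2) *\<^sub>R (4 *\<^sub>R v') = cross3 b (v t)"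
    by simp
  then have "cross3 b (v t) = 2 *\<^sub>R v'"
    by simp
  have "b = cross3 (v t) (cross3 b (v t))"
    using conds(3) unit(1) by (simp add: cross3_cross3_right b_def inner_commute norm_eq_1)
  also have "\<dots> = 2 *\<^sub>R cross3 (v t) v'"
    using \<open>cross3 b (v t) = 2 *\<^sub>R v'\<close> by (simp add: cross_mult_right)
  finally have "qmul q' (qconj (q t)) = (0, 2 *\<^sub>R cross3 (v t) v')"
    using conds(1) by (simp add: b_def prod_eq_iff)
  moreover have "q' = qmul (qmul q' (qconj (q t))) (q t)"
    using unit(2) by (simp add: qmul_assoc qmul_qconj_left qmul_qone_right[unfolded qone_def])
  ultimately show ?thesis
    using q' by simp
qed

lemma rollingI:
  assumes "q 0 = qone"
    and unit: "\<And>t. t \<in> {0..1} \<Longrightarrow> norm (v t) = 1 \<and> norm (q t) = 1"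
    and v': "\<And>t. t \<in> {0..1} \<Longrightarrow> (v has_vector_derivative v' t) (at t within {0..1})"
    and tangent: "\<And>t. t \<in> {0..1} \<Longrightarrow> inner (v t) (v' t) = 0"
    and q': "\<And>t. t \<in> {0..1} \<Longrightarrow>
      (q has_vector_derivative qmul (0, 2 *\<^sub>R cross3 (v t) (v' t)) (q t)) (at t within {0..1})"
  shows "rolling v q"
  unfolding rolling_def
proof (intro conjI ballI)
  fix t :: real
  assume t: "t \<in> {0..1}"
  have \<omega>: "qmul (qmul (0, 2 *\<^sub>R cross3 (v t) (v' t)) (q t)) (qconj (q t))
      = (0, 2 *\<^sub>R cross3 (v t) (v' t))"
    using unit[OF t] by (simp add: qmul_assoc qmul_qconj_right qmul_qone_right[unfolded qone_def])
  have "cross3 (cross3 (v t) (v' t)) (v t) = v' t"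
    using unit[OF t] tangent[OF t] by (simp add: cross3_cross3_left inner_commute norm_eq_1)
  moreover have "inner (cross3 (v t) (v' t)) (v t) = 0"
    by (simp add: dot_cross_self)
  ultimately show "\<exists>v'' q''. (v has_vector_derivative v'') (at t within {0..1}) \<and>
      (q has_vector_derivative q'') (at t within {0..1}) \<and>
      (let \<omega> = 2 *\<^sub>R qmul q'' (qconj (q t)) in
         fst \<omega> = 0 \<and> 4 *\<^sub>R v'' = cross3 (snd \<omega>) (v t) \<and> inner (snd \<omega>) (v t) = 0)"
    using v'[OF t] q'[OF t] by (intro exI) (auto simp: Let_def \<omega> cross_mult_left)
qed (use assms in auto)

lemma great_circle_has_vector_derivative:
  "((\<lambda>t. cos (t * \<theta>) *\<^sub>R w + sin (t * \<theta>) *\<^sub>R u) has_vector_derivative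
     \<theta> *\<^sub>R (cos (t * \<theta>) *\<^sub>R u - sin (t * \<theta>) *\<^sub>R w)) (at t within S)"
  by (auto intro!: derivative_eq_intros simp: algebra_simps)

lemma cross3_great_circle_velocity:
  "cross3 (cos x *\<^sub>R w + sin x *\<^sub>R u) (\<theta> *\<^sub>R (cos x *\<^sub>R u - sin x *\<^sub>R w)) = \<theta> *\<^sub>R cross3 w u"
proof -
  have "cross3 (cos x *\<^sub>R w + sin x *\<^sub>R u) (\<theta> *\<^sub>R (cos x *\<^sub>R u - sin x *\<^sub>R w))
      = (\<theta> * (cos x * cos x)) *\<^sub>R cross3 w u + (\<theta> * (sin x * sin x)) *\<^sub>R cross3 w u"
    by (simp add: cross_add_left cross_mult_left cross_mult_right Cross3.right_diff_distrib
        cross_skew[of u w] algebra_simps)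
  also have "\<dots> = \<theta> *\<^sub>R cross3 w u"
    by (metis distrib_left scaleR_left_distrib sin_cos_squared_add3 mult_1_right)
  finally show ?thesis .
qed

lemma qexp_has_vector_derivative:
  assumes "norm n = 1"
  shows "((\<lambda>t. (cos (t * \<phi>), sin (t * \<phi>) *\<^sub>R n)) has_vector_derivative
           qmul (0, \<phi> *\<^sub>R n) (cos (t * \<phi>), sin (t * \<phi>) *\<^sub>R n)) (at t within S)"
proof -
  have "((\<lambda>t. (cos (t * \<phi>), sin (t * \<phi>) *\<^sub>R n)) has_vector_derivative
           (- sin (t * \<phi>) * \<phi>, (cos (t * \<phi>) * \<phi>) *\<^sub>R n)) (at t within S)"
    by (auto intro!: derivative_eq_intros
        simp: has_real_derivative_iff_has_vector_derivative[symmetric])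
  moreover have "qmul (0, \<phi> *\<^sub>R n) (cos (t * \<phi>), sin (t * \<phi>) *\<^sub>R n)
      = (- sin (t * \<phi>) * \<phi>, (cos (t * \<phi>) * \<phi>) *\<^sub>R n)"
    using assms by (simp add: qmul_def cross_mult_left cross_mult_right norm_eq_1)
  ultimately show ?thesis
    by simp
qed

lemma norm_qexp: "norm n = 1 \<Longrightarrow> norm (cos x, sin x *\<^sub>R n) = 1"
  by (simp add: norm_Pair)

lemma rolling_great_circle:
  fixes w u :: "real^3" and \<theta> :: real
  assumes w: "norm w = 1" and u: "norm u = 1" and wu: "inner w u = 0"
  defines "v \<equiv> \<lambda>t. cos (t * \<theta>) *\<^sub>R w + sin (t * \<theta>) *\<^sub>R u"
    and "q\<^sub>0 \<equiv> \<lambda>t. (cos (t * (2 * \<theta>)), sin (t * (2 * \<theta>)) *\<^sub>R cross3 w u)"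
  shows "rolling v q\<^sub>0"
    and "rolling v q \<Longrightarrow> t \<in> {0..1} \<Longrightarrow> q t = q\<^sub>0 t"
proof -
  define n where "n = cross3 w u"
  define v' where "v' t = \<theta> *\<^sub>R (cos (t * \<theta>) *\<^sub>R u - sin (t * \<theta>) *\<^sub>R w)" for t
  have n: "norm n = 1"
    using norm_cross_dot[of w u] w u wu by (simp add: n_def norm_eq_1 power2_norm_eq_inner)
  have v': "(v has_vector_derivative v' t) (at t within {0..1})" for t
    unfolding v_def v'_def by (rule great_circle_has_vector_derivative)
  have axis: "2 *\<^sub>R cross3 (v t) (v' t) = (2 * \<theta>) *\<^sub>R n" for t
    unfolding v_def v'_def n_def cross3_great_circle_velocity by simp
  have q: "(q has_vector_derivative qmul (0, (2 * \<theta>) *\<^sub>R n) (q t)) (at t within {0..1})"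
    if "rolling v q" "t \<in> {0..1}" for q t
    using rolling_has_vector_derivative[OF that v'] unfolding axis .
  have q\<^sub>0: "(q\<^sub>0 has_vector_derivative qmul (0, (2 * \<theta>) *\<^sub>R n) (q\<^sub>0 t)) (at t within S)" for t S
    unfolding q\<^sub>0_def n_def[symmetric] by (rule qexp_has_vector_derivative[OF n])
  have unit_v: "norm (v t) = 1" and tangent: "inner (v t) (v' t) = 0" for t
    using w u wu
    by (simp_all add: v_def v'_def norm_eq_1 inner_add_left inner_add_right inner_diff_right
        inner_commute algebra_simps)
  show "rolling v q\<^sub>0"
  proof (rule rollingI[where v' = v'])
    show "q\<^sub>0 0 = qone"
      by (simp add: q\<^sub>0_def qone_def)
    show "norm (v t) = 1 \<and> norm (q\<^sub>0 t) = 1" for t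
      using unit_v norm_qexp[OF n] by (simp add: q\<^sub>0_def n_def)
    show "(q\<^sub>0 has_vector_derivative qmul (0, 2 *\<^sub>R cross3 (v t) (v' t)) (q\<^sub>0 t)) (at t within {0..1})"
      for t
      unfolding axis by (rule q\<^sub>0)
  qed (use v' tangent in auto)
  show "q t = q\<^sub>0 t" if "rolling v q" "t \<in> {0..1}"
  proof (rule left_pure_flow_unique[where S = "{0..1}" and s = 0])
    show "q 0 = q\<^sub>0 0"
      using \<open>rolling v q\<close> by (simp add: rolling_def q\<^sub>0_def qone_def)
  qed (use q[OF \<open>rolling v q\<close>] q\<^sub>0 that in auto)
qed

lemma arc_eq_great_circle:
  fixes w1 w2 u :: "real^3" and \<theta> :: real
  assumes w1: "norm w1 = 1" and w2: "norm w2 = 1" and c: "\<bar>inner w1 w2\<bar> < 1"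
  defines "\<theta> \<equiv> arccos (inner w1 w2)"
    and "u \<equiv> (1 / sin \<theta>) *\<^sub>R (w2 - cos \<theta> *\<^sub>R w1)"
  shows "norm u = 1" and "inner w1 u = 0"
    and "arc w1 w2 = (\<lambda>t. cos (t * \<theta>) *\<^sub>R w1 + sin (t * \<theta>) *\<^sub>R u)"
proof -
  have cos: "cos \<theta> = inner w1 w2"
    using c by (simp add: \<theta>_def cos_arccos_abs)
  have sin: "sin \<theta> = sqrt (1 - (inner w1 w2)\<^sup>2)"
    using c by (simp add: \<theta>_def sin_arccos_abs)
  have "sin \<theta> > 0"
    using c by (simp add: sin abs_square_less_1)
  have "norm (w2 - cos \<theta> *\<^sub>R w1) = sin \<theta>"
    using w1 w2 by (simp add: norm_eq_sqrt_inner sin cos inner_diff_left inner_diff_right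
        inner_commute norm_eq_1 power2_eq_square)
  then show "norm u = 1"
    using \<open>sin \<theta> > 0\<close> by (simp add: u_def)
  show "inner w1 u = 0"
    using w1 by (simp add: u_def cos inner_diff_right norm_eq_1)
  show "arc w1 w2 = (\<lambda>t. cos (t * \<theta>) *\<^sub>R w1 + sin (t * \<theta>) *\<^sub>R u)"
  proof
    fix t
    have "sin ((1 - t) * \<theta>) / sin \<theta> = cos (t * \<theta>) - sin (t * \<theta>) / sin \<theta> * cos \<theta>"
      using sin_diff[of \<theta> "t * \<theta>"] \<open>sin \<theta> > 0\<close> by (simp add: field_simps left_diff_distrib)
    then have "arc w1 w2 t = (cos (t * \<theta>) - sin (t * \<theta>) / sin \<theta> * cos \<theta>) *\<^sub>R w1
        + (sin (t * \<theta>) / sin \<theta>) *\<^sub>R w2"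
      by (simp add: arc_def \<theta>_def[symmetric])
    then show "arc w1 w2 t = cos (t * \<theta>) *\<^sub>R w1 + sin (t * \<theta>) *\<^sub>R u"
      by (simp add: u_def algebra_simps)
  qed
qed

text \<open>This is \<open>cos 2\<theta> + sin 2\<theta> n\<close> for \<open>\<theta>\<close> the length of the arc from \<open>w\<^sub>1\<close> to \<open>w\<^sub>2\<close> and
  \<open>n = w\<^sub>1 \<times> w\<^sub>2 / sin \<theta>\<close> its unit normal.\<close>
definition arc_monodromy :: "real^3 \<Rightarrow> real^3 \<Rightarrow> quat" where
  "arc_monodromy w1 w2 = (2 * (inner w1 w2)\<^sup>2 - 1, (2 * inner w1 w2) *\<^sub>R cross3 w1 w2)"

lemma rolling_arc:
  fixes w1 w2 :: "real^3"
  assumes "norm w1 = 1" and "norm w2 = 1" and "\<bar>inner w1 w2\<bar> < 1"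
  shows "\<exists>q. rolling (arc w1 w2) q"
    and "rolling (arc w1 w2) q \<Longrightarrow> q 1 = arc_monodromy w1 w2"
proof -
  define \<theta> where "\<theta> = arccos (inner w1 w2)"
  define u where "u = (1 / sin \<theta>) *\<^sub>R (w2 - cos \<theta> *\<^sub>R w1)"
  note frame = arc_eq_great_circle[OF assms, folded \<theta>_def, folded u_def]
  note great_circle = rolling_great_circle[OF \<open>norm w1 = 1\<close> frame(1,2), of \<theta>, folded frame(3)]
  show "\<exists>q. rolling (arc w1 w2) q"
    using great_circle(1) by blast
  have cos: "cos \<theta> = inner w1 w2"
    using assms(3) by (simp add: \<theta>_def cos_arccos_abs)
  have "cross3 w1 u = (1 / sin \<theta>) *\<^sub>R cross3 w1 w2"
    by (simp add: u_def cross_mult_right Cross3.right_diff_distrib)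
  moreover have "sin \<theta> \<noteq> 0"
    using assms(3) by (simp add: \<theta>_def sin_arccos_nonzero)
  ultimately have "(cos (1 * (2 * \<theta>)), sin (1 * (2 * \<theta>)) *\<^sub>R cross3 w1 u) = arc_monodromy w1 w2"
    by (simp add: arc_monodromy_def cos_double_cos sin_double cos)
  then show "q 1 = arc_monodromy w1 w2" if "rolling (arc w1 w2) q"
    using great_circle(2)[OF that, of 1] by simp
qed

lemma arc_monodromy_scaleR:
  assumes "\<bar>a * b\<bar> = 1"
  shows "arc_monodromy (a *\<^sub>R w1) (b *\<^sub>R w2) = arc_monodromy w1 w2"
proof -
  have "(a * b)\<^sup>2 = 1"
    using assms by (metis power2_abs power_one)
  then show ?thesis
    by (simp add: arc_monodromy_def cross_mult_left cross_mult_right power_mult_distrib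
        power2_eq_square algebra_simps)
qed

lemma abs_inner_less_1:
  fixes w1 w2 :: "'a::real_inner"
  assumes "norm w1 = 1" and "norm w2 = 1" and "w2 \<noteq> w1" and "w2 \<noteq> - w1"
  shows "\<bar>inner w1 w2\<bar> < 1"
  using Cauchy_Schwarz_ineq2[of w1 w2] norm_cauchy_schwarz_abs_eq[of w1 w2] assms by auto

theorem lemma5:
  fixes v1 v2 :: "real^3"
  assumes "norm v1 = 1" and "norm v2 = 1" and "v2 \<noteq> v1" and "v2 \<noteq> - v1"
  shows "\<exists>\<mu>. \<forall>e1 e2 :: real. e1 \<in> {1, -1} \<and> e2 \<in> {1, -1} \<longrightarrow>
           (\<exists>q. rolling (arc (e1 *\<^sub>R v1) (e2 *\<^sub>R v2)) q) \<and>
           (\<forall>q. rolling (arc (e1 *\<^sub>R v1) (e2 *\<^sub>R v2)) q \<longrightarrow> q 1 = \<mu>)"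
proof (intro exI[of _ "arc_monodromy v1 v2"] allI impI)
  fix e1 e2 :: real
  assume "e1 \<in> {1, -1} \<and> e2 \<in> {1, -1}"
  then have signs: "\<bar>e1\<bar> = 1" "\<bar>e2\<bar> = 1"
    by auto
  have "norm (e1 *\<^sub>R v1) = 1" "norm (e2 *\<^sub>R v2) = 1"
    using signs assms(1,2) by simp_all
  moreover have "\<bar>inner (e1 *\<^sub>R v1) (e2 *\<^sub>R v2)\<bar> < 1"
    using signs abs_inner_less_1[OF assms] by (simp add: abs_mult)
  moreover have "arc_monodromy (e1 *\<^sub>R v1) (e2 *\<^sub>R v2) = arc_monodromy v1 v2"
    using signs by (simp add: arc_monodromy_scaleR abs_mult)
  ultimately show "(\<exists>q. rolling (arc (e1 *\<^sub>R v1) (e2 *\<^sub>R v2)) q) \<and>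
      (\<forall>q. rolling (arc (e1 *\<^sub>R v1) (e2 *\<^sub>R v2)) q \<longrightarrow> q 1 = arc_monodromy v1 v2)"
    using rolling_arc by metis
qed

end
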